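(* Let $\mathcal{G}=(\vec V,\vec E)$ be a DAG with maximum (in plus out) degree $\Delta$, let $k\ge 2$, and let $V_i,V_j\in\vec V$ be non-adjacent. If $|\vec A_{ij}|\ge(2+\Delta^2)(\lceil\lg k\rceil+1)$, then an independence preserving augmentation $(\vec S_i^+,\vec S_j^+)$ of $(V_i,V_j)$ exists.
   Context: $\operatorname{\mathbf{DE}}(V)$ denotes the descendants of $V$ in $\mathcal{G}$; $\vec D_{ij}=\operatorname{\mathbf{DE}}(V_i)\cap\operatorname{\mathbf{DE}}(V_j)$ and $\vec A_{ij}=\vec V\setminus\vec D_{ij}$. For sets $\vec S_i,\vec S_j\subseteq\vec V\setminus\{V_i,V_j\}$, the ordered pair $(\vec S_i^+,\vec S_j^+)=(\vec S_i\cup\{V_i\},\vec S_j\cup\{V_j\})$ is an independence preserving augmentation (IPA) of $(V_i,V_j)$ if for some $\vec C\subset\vec V$, $\vec S_i^+$ and $\vec S_j^+$ are d-separated by $\vec C$ in $\mathcal{G}$. In the paper's construction the IPA has $|\vec S_i|=|\vec S_j|=\lceil\lg k\rceil$ with $\vec S_i,\vec S_j\subseteq\vec A_{ij}$. *)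

theory Defs
  imports Complex_Main
begin

definition is_dag :: "'a set \<Rightarrow> ('a \<times> 'a) set \<Rightarrow> bool" where
  "is_dag V E \<longleftrightarrow> finite V \<and> E \<subseteq> V \<times> V \<and> acyclic E"

definition degree :: "('a \<times> 'a) set \<Rightarrow> 'a \<Rightarrow> nat" where
  "degree E v = card {u. (u, v) \<in> E} + card {w. (v, w) \<in> E}"

definition max_degree :: "'a set \<Rightarrow> ('a \<times> 'a) set \<Rightarrow> nat" where
  "max_degree V E = Max (degree E ` V)"

definition adjacent :: "('a \<times> 'a) set \<Rightarrow> 'a \<Rightarrow> 'a \<Rightarrow> bool" where
  "adjacent E u v \<longleftrightarrow> (u, v) \<in> E \<or> (v, u) \<in> E"

definition DE :: "'a set \<Rightarrow> ('a \<times> 'a) set \<Rightarrow> 'a \<Rightarrow> 'a set" where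
  "DE V E v = {w \<in> V. (v, w) \<in> E\<^sup>*}"

definition D_set :: "'a set \<Rightarrow> ('a \<times> 'a) set \<Rightarrow> 'a \<Rightarrow> 'a \<Rightarrow> 'a set" where
  "D_set V E vi vj = DE V E vi \<inter> DE V E vj"

definition A_set :: "'a set \<Rightarrow> ('a \<times> 'a) set \<Rightarrow> 'a \<Rightarrow> 'a \<Rightarrow> 'a set" where
  "A_set V E vi vj = V - D_set V E vi vj"

definition is_path :: "('a \<times> 'a) set \<Rightarrow> 'a list \<Rightarrow> bool" where
  "is_path E p \<longleftrightarrow> length p \<ge> 2 \<and> distinct p \<and>
     (\<forall>i. Suc i < length p \<longrightarrow> adjacent E (p ! i) (p ! Suc i))"

text \<open>Interior vertex at position i (0 < i < length p - 1) is a collider.\<close>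
definition collider :: "('a \<times> 'a) set \<Rightarrow> 'a list \<Rightarrow> nat \<Rightarrow> bool" where
  "collider E p i \<longleftrightarrow> (p ! (i - 1), p ! i) \<in> E \<and> (p ! Suc i, p ! i) \<in> E"

definition blocked :: "'a set \<Rightarrow> ('a \<times> 'a) set \<Rightarrow> 'a set \<Rightarrow> 'a list \<Rightarrow> bool" where
  "blocked V E Z p \<longleftrightarrow> (\<exists>i. 0 < i \<and> Suc i < length p \<and>
      ((\<not> collider E p i \<and> p ! i \<in> Z) \<or>
       (collider E p i \<and> DE V E (p ! i) \<inter> Z = {})))"

definition d_separated :: "'a set \<Rightarrow> ('a \<times> 'a) set \<Rightarrow> 'a set \<Rightarrow> 'a set \<Rightarrow> 'a set \<Rightarrow> bool" where
  "d_separated V E X Y Z \<longleftrightarrow> X \<subseteq> V \<and> Y \<subseteq> V \<and> Z \<subseteq> V \<and>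
     X \<inter> Y = {} \<and> X \<inter> Z = {} \<and> Y \<inter> Z = {} \<and>
     (\<forall>p. is_path E p \<and> hd p \<in> X \<and> last p \<in> Y \<longrightarrow> blocked V E Z p)"

definition is_IPA :: "'a set \<Rightarrow> ('a \<times> 'a) set \<Rightarrow> 'a \<Rightarrow> 'a \<Rightarrow> 'a set \<Rightarrow> 'a set \<Rightarrow> bool" where
  "is_IPA V E vi vj Si Sj \<longleftrightarrow> Si \<subseteq> V - {vi, vj} \<and> Sj \<subseteq> V - {vi, vj} \<and>
     (\<exists>C. C \<subset> V \<and> d_separated V E (insert vi Si) (insert vj Sj) C)"

end

theory Submission
  imports Defs
begin

(* Choose S_i in A_ij outside the moral-graph neighbourhood of V_j, then S_j in A_ij outside the
   moral-graph neighbourhoods of V_i and of all of S_i.  A vertex has at most 1 + Delta^2 moral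
   neighbours (itself included), so the bound on |A_ij| leaves room for both choices.  Afterwards no
   vertex of S_i^+ is adjacent to, or shares a child with, a vertex of S_j^+, except for the pair
   (V_i, V_j), whose common children lie in D_ij.

   The vertices of A_ij outside S_i^+ and S_j^+ then d-separate S_i^+ from S_j^+.  On an unblocked
   path, an E^+-maximal path vertex in D_ij has no outgoing path edge, since D_ij is closed under
   successors.  It cannot be V_i or V_j, which reach every vertex of D_ij, so it is a collider in
   D_ij; but such a collider is blocked, as its descendants stay in D_ij.  Hence the interior of the
   path avoids D_ij, its non-colliders lie in S_i^+ or S_j^+, and the vertex after the last visit to
   S_i^+ is a collider that is a common child of S_i^+ and S_j^+, hence in D_ij: a contradiction. *)

lemma D_set_succ_closed:
  assumes "E \<subseteq> V \<times> V" and "w \<in> D_set V E vi vj" and "(w, u) \<in> E"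
  shows "u \<in> D_set V E vi vj"
  using assms by (auto simp: D_set_def DE_def intro: rtrancl_into_rtrancl)

lemma DE_subset_D_set: "w \<in> D_set V E vi vj \<Longrightarrow> DE V E w \<subseteq> D_set V E vi vj"
  by (auto simp: D_set_def DE_def intro: rtrancl_trans)

lemma is_path_nth_in:
  assumes "is_path E p" and "E \<subseteq> V \<times> V" and "i < length p"
  shows "p ! i \<in> V"
proof (cases "Suc i < length p")
  case True
  then have "adjacent E (p ! i) (p ! Suc i)"
    using assms(1) by (simp add: is_path_def)
  then show ?thesis
    using assms(2) by (auto simp: adjacent_def)
next
  case False
  with assms have "Suc (i - 1) < length p" and "Suc (i - 1) = i"
    by (auto simp: is_path_def)
  then have "adjacent E (p ! (i - 1)) (p ! i)"
    using assms(1) unfolding is_path_def by metis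
  then show ?thesis
    using assms(2) by (auto simp: adjacent_def)
qed

lemma collider_if_no_out_edges:
  assumes "is_path E p" and "0 < i" and "Suc i < length p"
    and "(p ! i, p ! (i - 1)) \<notin> E" and "(p ! i, p ! Suc i) \<notin> E"
  shows "collider E p i"
proof -
  have "Suc (i - 1) = i"
    using assms(2) by simp
  then have "adjacent E (p ! (i - 1)) (p ! i)" and "adjacent E (p ! i) (p ! Suc i)"
    using assms(1,3) unfolding is_path_def by (metis Suc_lessD)+
  with assms(4,5) show ?thesis
    by (auto simp: collider_def adjacent_def)
qed

lemma finite_acyclic_trancl_maximal:
  assumes "finite E" and "acyclic E" and "x \<in> Q"
  obtains z where "z \<in> Q" and "\<And>y. (z, y) \<in> E\<^sup>+ \<Longrightarrow> y \<notin> Q"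
proof -
  have "wf ((E\<^sup>+)\<inverse>)"
    using assms(1,2) by (simp add: finite_acyclic_wf_converse wf_trancl flip: trancl_converse)
  then show ?thesis
    using assms(3) that by (elim wfE_min) auto
qed

lemma unblocked_path_interior_notin_D_set:
  assumes dag: "is_dag V E"
    and path: "is_path E p" and hd: "hd p \<in> X" and last: "last p \<in> Y"
    and XD: "X \<inter> D_set V E vi vj \<subseteq> {vi}" and YD: "Y \<inter> D_set V E vi vj \<subseteq> {vj}"
    and CD: "C \<inter> D_set V E vi vj = {}"
    and unblocked: "\<not> blocked V E C p"
    and i: "0 < i" "Suc i < length p"
  shows "p ! i \<notin> D_set V E vi vj"
proof
  define D where "D = D_set V E vi vj"
  define n where "n = length p"
  assume "p ! i \<in> D_set V E vi vj"
  then have iD: "p ! i \<in> set p \<inter> D"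
    using i by (simp add: D_def)
  have EV: "E \<subseteq> V \<times> V" and "finite E" and "acyclic E"
    using dag by (auto simp: is_dag_def intro: finite_subset)
  obtain z where "z \<in> set p \<inter> D" and zmax: "\<And>y. (z, y) \<in> E\<^sup>+ \<Longrightarrow> y \<notin> set p \<inter> D"
    using finite_acyclic_trancl_maximal[OF \<open>finite E\<close> \<open>acyclic E\<close> iD] by blast
  then obtain m where m: "m < n" "p ! m = z" and zD: "z \<in> D"
    by (auto simp: in_set_conv_nth n_def)
  have "n \<ge> 2" and "distinct p" and "p \<noteq> []"
    using path by (auto simp: is_path_def n_def)
  consider "m = 0 \<or> m = n - 1" | "0 < m" "Suc m < n"
    using m(1) by linarith
  then show False
  proof cases
    case 1
    then have "z \<in> X \<or> z \<in> Y"
      using m hd last \<open>p \<noteq> []\<close> by (auto simp: hd_conv_nth last_conv_nth n_def)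
    then have "(z, p ! i) \<in> E\<^sup>*"
      using XD YD zD iD by (auto simp: D_def D_set_def DE_def)
    moreover have "z \<noteq> p ! i"
      using 1 m \<open>distinct p\<close> i \<open>n \<ge> 2\<close> by (auto simp: nth_eq_iff_index_eq n_def)
    ultimately show False
      using zmax iD by (auto simp: rtrancl_eq_or_trancl)
  next
    case 2
    have no_out: "(z, p ! j) \<notin> E" if "j < n" for j
    proof
      assume "(z, p ! j) \<in> E"
      then have "p ! j \<in> set p \<inter> D"
        using D_set_succ_closed[OF EV] zD that by (auto simp: D_def n_def)
      then show False
        using zmax \<open>(z, p ! j) \<in> E\<close> by blast
    qed
    have "collider E p m"
      using 2 m by (intro collider_if_no_out_edges[OF path]) (auto simp: no_out n_def)
    moreover have "DE V E (p ! m) \<inter> C = {}"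
      using DE_subset_D_set[of "p ! m" V E vi vj] zD m CD by (auto simp: D_def)
    ultimately show False
      using unblocked 2 by (auto simp: blocked_def n_def)
  qed
qed

lemma path_has_collider_between:
  assumes acyc: "acyclic E" and path: "is_path E p" and hd: "hd p \<in> X" and last: "last p \<in> Y"
    and XY: "X \<inter> Y = {}"
    and nonadj: "\<And>x y. x \<in> X \<Longrightarrow> y \<in> Y \<Longrightarrow> \<not> adjacent E x y"
    and noncollider_in_XY:
      "\<And>i. 0 < i \<Longrightarrow> Suc i < length p \<Longrightarrow> \<not> collider E p i \<Longrightarrow> p ! i \<in> X \<union> Y"
  shows "\<exists>t. Suc (Suc t) < length p \<and> p ! t \<in> X \<and> p ! Suc (Suc t) \<in> Y \<and>
    collider E p (Suc t)"
proof -
  define n where "n = length p"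
  have "n \<ge> 2" and adj: "\<And>i. Suc i < n \<Longrightarrow> adjacent E (p ! i) (p ! Suc i)"
    using path by (auto simp: is_path_def n_def)
  then have "p \<noteq> []"
    by (auto simp: n_def)
  then have first: "p ! 0 \<in> X" and final: "p ! (n - 1) \<in> Y"
    using hd last by (simp_all add: hd_conv_nth last_conv_nth n_def)
  define t where "t = Max {i. i < n \<and> p ! i \<in> X}"
  have "t \<in> {i. i < n \<and> p ! i \<in> X}"
    unfolding t_def by (rule Max_in) (use first \<open>n \<ge> 2\<close> in \<open>auto intro!: exI[of _ 0]\<close>)
  then have "t < n" and tX: "p ! t \<in> X"
    by simp_all
  have tmax: "i \<le> t" if "i < n" "p ! i \<in> X" for i
    unfolding t_def by (rule Max_ge) (use that in auto)
  have "Suc t < n"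
    using \<open>t < n\<close> tX final XY by (metis Suc_lessI diff_Suc_1 disjoint_iff)
  have "p ! Suc t \<notin> X"
    using tmax[of "Suc t"] \<open>Suc t < n\<close> by auto
  moreover have "p ! Suc t \<notin> Y"
    using nonadj tX adj[OF \<open>Suc t < n\<close>] by blast
  ultimately have "Suc (Suc t) < n"
    using \<open>Suc t < n\<close> final by (metis Suc_lessI diff_Suc_1)
  then have col: "collider E p (Suc t)"
    using noncollider_in_XY[of "Suc t"] \<open>p ! Suc t \<notin> X\<close> \<open>p ! Suc t \<notin> Y\<close> by (auto simp: n_def)
  have "p ! Suc (Suc t) \<in> Y"
  proof (cases "Suc (Suc (Suc t)) = n")
    case True
    then show ?thesis
      using final by (metis diff_Suc_1)
  next
    case False
    have "(p ! Suc (Suc t), p ! Suc t) \<in> E"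
      using col by (simp add: collider_def)
    then have "(p ! Suc t, p ! Suc (Suc t)) \<notin> E"
      using acyc by (meson acyclic_def r_into_trancl trancl_into_trancl)
    then have "\<not> collider E p (Suc (Suc t))"
      by (simp add: collider_def)
    then have "p ! Suc (Suc t) \<in> X \<union> Y"
      using noncollider_in_XY False \<open>Suc (Suc t) < n\<close> by (simp add: n_def)
    moreover have "p ! Suc (Suc t) \<notin> X"
      using tmax[of "Suc (Suc t)"] \<open>Suc (Suc t) < n\<close> by auto
    ultimately show ?thesis
      by simp
  qed
  then show ?thesis
    using \<open>Suc (Suc t) < n\<close> tX col by (auto simp: n_def)
qed

lemma d_separated_by_non_descendants:
  assumes dag: "is_dag V E"
    and XV: "X \<subseteq> V" and YV: "Y \<subseteq> V" and XY: "X \<inter> Y = {}"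
    and XD: "X \<inter> D_set V E vi vj \<subseteq> {vi}" and YD: "Y \<inter> D_set V E vi vj \<subseteq> {vj}"
    and nonadj: "\<And>x y. x \<in> X \<Longrightarrow> y \<in> Y \<Longrightarrow> \<not> adjacent E x y"
    and common_child: "\<And>x y c. x \<in> X \<Longrightarrow> y \<in> Y \<Longrightarrow> (x, c) \<in> E \<Longrightarrow> (y, c) \<in> E \<Longrightarrow>
      c \<in> D_set V E vi vj"
  shows "d_separated V E X Y (V - D_set V E vi vj - (X \<union> Y))"
proof -
  define C where "C = V - D_set V E vi vj - (X \<union> Y)"
  have EV: "E \<subseteq> V \<times> V" and acyc: "acyclic E"
    using dag by (auto simp: is_dag_def)
  have "blocked V E C p" if path: "is_path E p" and hd: "hd p \<in> X" and last: "last p \<in> Y" for p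
  proof (rule ccontr)
    assume unblocked: "\<not> blocked V E C p"
    have notD: "p ! i \<notin> D_set V E vi vj" if "0 < i" "Suc i < length p" for i
      using unblocked_path_interior_notin_D_set[OF dag path hd last XD YD _ unblocked] that
      by (auto simp: C_def)
    have "p ! i \<in> X \<union> Y" if "0 < i" "Suc i < length p" "\<not> collider E p i" for i
      using unblocked that notD[OF that(1,2)] is_path_nth_in[OF path EV, of i]
      by (auto simp: blocked_def C_def)
    then obtain t where t: "Suc (Suc t) < length p" "p ! t \<in> X" "p ! Suc (Suc t) \<in> Y"
      and "collider E p (Suc t)"
      using path_has_collider_between[OF acyc path hd last XY nonadj] by blast
    then have "p ! Suc t \<in> D_set V E vi vj"
      using common_child[OF t(2,3)] by (simp add: collider_def)
    then show False
      using notD t(1) by simp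
  qed
  then show ?thesis
    using XV YV XY by (auto simp: d_separated_def C_def)
qed

definition moral_nbhd :: "('a \<times> 'a) set \<Rightarrow> 'a \<Rightarrow> 'a set" where
  "moral_nbhd E x = insert x ({y. adjacent E x y} \<union> {y. \<exists>c. (x, c) \<in> E \<and> (y, c) \<in> E})"

lemma moral_nbhd_self: "x \<in> moral_nbhd E x"
  by (simp add: moral_nbhd_def)

lemma moral_nbhd_sym: "y \<in> moral_nbhd E x \<longleftrightarrow> x \<in> moral_nbhd E y"
  by (auto simp: moral_nbhd_def adjacent_def)

lemma finite_moral_nbhd: "E \<subseteq> V \<times> V \<Longrightarrow> finite V \<Longrightarrow> finite (moral_nbhd E x)"
  by (rule finite_subset[of _ "insert x V"]) (auto simp: moral_nbhd_def adjacent_def)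

lemma card_moral_nbhd_le:
  assumes EV: "E \<subseteq> V \<times> V" and "finite V" and "x \<in> V"
    and deg: "\<And>v. v \<in> V \<Longrightarrow> degree E v \<le> d"
  shows "card (moral_nbhd E x) \<le> 1 + d\<^sup>2"
proof -
  define In where "In c = {u. (u, c) \<in> E}" for c
  define Out where "Out = {w. (x, w) \<in> E}"
  have fin: "finite (In c)" "finite Out" for c
    using \<open>finite V\<close> EV by (auto simp: In_def Out_def intro: finite_subset[of _ V])
  have coparents: "card (insert c (In c - {x})) \<le> d" if "c \<in> Out" for c
  proof -
    have "x \<in> In c" and "c \<in> V"
      using that EV by (auto simp: In_def Out_def)
    then have "card (insert c (In c - {x})) \<le> card (In c)"
      using fin(1)[of c] by (intro card_insert_le_m1) (auto simp: card_gt_0_iff)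
    also have "\<dots> \<le> degree E c"
      by (simp add: degree_def In_def)
    finally show ?thesis
      using deg[OF \<open>c \<in> V\<close>] by linarith
  qed
  have "moral_nbhd E x \<subseteq> insert x (In x \<union> (\<Union>c\<in>Out. insert c (In c - {x})))"
    by (auto simp: moral_nbhd_def adjacent_def In_def Out_def)
  then have "card (moral_nbhd E x) \<le> card (insert x (In x \<union> (\<Union>c\<in>Out. insert c (In c - {x}))))"
    by (rule card_mono[rotated]) (simp add: fin)
  also have "\<dots> \<le> 1 + card (In x \<union> (\<Union>c\<in>Out. insert c (In c - {x})))"
    by (rule card_insert_le_m1) simp_all
  also have "\<dots> \<le> 1 + (card (In x) + (\<Sum>c\<in>Out. card (insert c (In c - {x}))))"
    using card_Un_le[of "In x" "\<Union>c\<in>Out. insert c (In c - {x})"]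
      card_UN_le[OF fin(2), of "\<lambda>c. insert c (In c - {x})"] by linarith
  also have "\<dots> \<le> 1 + (card (In x) + card Out * d)"
    using sum_bounded_above[of Out _ d] coparents by simp
  also have "\<dots> \<le> 1 + d\<^sup>2"
  proof -
    have "card (In x) + card Out \<le> d"
      using deg[OF \<open>x \<in> V\<close>] by (simp add: degree_def In_def Out_def)
    moreover have "a + b * d \<le> d\<^sup>2" if "a + b \<le> d" for a b
      using that by (cases "d = 0")
        (auto simp: power2_eq_square algebra_simps intro: mult_right_mono order_trans[of _ "(a + b) * d"])
    ultimately show ?thesis
      by simp
  qed
  finally show ?thesis .
qed

lemma is_IPA_if_moral_separated:
  assumes dag: "is_dag V E" and "vi \<in> V" and "vj \<in> V" and "vi \<noteq> vj"
    and "\<not> adjacent E vi vj"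
    and Si: "Si \<subseteq> A_set V E vi vj - {vi, vj}" and Sj: "Sj \<subseteq> A_set V E vi vj - {vi, vj}"
    and far: "\<forall>x \<in> insert vi Si. \<forall>y \<in> insert vj Sj.
      (x, y) \<noteq> (vi, vj) \<longrightarrow> y \<notin> moral_nbhd E x"
  shows "is_IPA V E vi vj Si Sj"
proof -
  define X where "X = insert vi Si"
  define Y where "Y = insert vj Sj"
  define C where "C = V - D_set V E vi vj - (X \<union> Y)"
  have EV: "E \<subseteq> V \<times> V"
    using dag by (simp add: is_dag_def)
  have far_XY: "y \<notin> moral_nbhd E x" if "x \<in> X" "y \<in> Y" "(x, y) \<noteq> (vi, vj)" for x y
    using far[rule_format, of x y] that by (simp add: X_def Y_def)
  have XV: "X \<subseteq> V" and YV: "Y \<subseteq> V"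
    using Si Sj \<open>vi \<in> V\<close> \<open>vj \<in> V\<close> by (auto simp: X_def Y_def A_set_def)
  have XD: "X \<inter> D_set V E vi vj \<subseteq> {vi}" and YD: "Y \<inter> D_set V E vi vj \<subseteq> {vj}"
    using Si Sj by (auto simp: X_def Y_def A_set_def)
  have "z \<notin> Y" if "z \<in> X" for z
    using far_XY[of z z] moral_nbhd_self[of z E] \<open>vi \<noteq> vj\<close> that by auto
  then have XY: "X \<inter> Y = {}"
    by blast
  have nonadj: "\<not> adjacent E x y" if "x \<in> X" "y \<in> Y" for x y
  proof (cases "(x, y) = (vi, vj)")
    case True
    then show ?thesis
      using \<open>\<not> adjacent E vi vj\<close> by simp
  next
    case False
    then show ?thesis
      using far_XY[OF that] by (simp add: moral_nbhd_def)
  qed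
  have common_child: "c \<in> D_set V E vi vj" if "x \<in> X" "y \<in> Y" "(x, c) \<in> E" "(y, c) \<in> E" for x y c
  proof (cases "(x, y) = (vi, vj)")
    case True
    then show ?thesis
      using that(3,4) EV by (auto simp: D_set_def DE_def)
  next
    case False
    then show ?thesis
      using far_XY[OF that(1,2)] that(3,4) by (auto simp: moral_nbhd_def)
  qed
  have "d_separated V E X Y C"
    unfolding C_def using XV YV XY XD YD nonadj common_child
    by (rule d_separated_by_non_descendants[OF dag])
  moreover have "C \<subset> V"
    using \<open>vi \<in> V\<close> by (auto simp: C_def X_def)
  moreover have "Si \<subseteq> V - {vi, vj}" and "Sj \<subseteq> V - {vi, vj}"
    using Si Sj by (auto simp: A_set_def)
  ultimately show ?thesis
    unfolding is_IPA_def X_def Y_def by blast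
qed

lemma exists_subset_card_avoiding:
  assumes "finite B" and "card B + n \<le> card A"
  shows "\<exists>S. S \<subseteq> A - B \<and> card S = n"
proof -
  have "n \<le> card (A - B)"
    using diff_card_le_card_Diff[OF \<open>finite B\<close>, of A] assms(2) by linarith
  then show ?thesis
    by (meson obtain_subset_with_card_n)
qed

lemma exists_far_subsets:
  fixes nb :: "'a \<Rightarrow> 'a set"
  assumes "A \<subseteq> V" and "vi \<in> V" and "vj \<in> V"
    and nb_finite: "\<And>x. x \<in> V \<Longrightarrow> finite (nb x)"
    and nb_card: "\<And>x. x \<in> V \<Longrightarrow> card (nb x) \<le> m"
    and nb_self: "\<And>x. x \<in> nb x"
    and nb_sym: "\<And>x y. y \<in> nb x \<longleftrightarrow> x \<in> nb y"
    and large: "(m + 1) * (L + 1) \<le> card A"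
  shows "\<exists>Si Sj. Si \<subseteq> A - {vi, vj} \<and> Sj \<subseteq> A - {vi, vj} \<and> card Si = L \<and> card Sj = L \<and>
    (\<forall>x \<in> insert vi Si. \<forall>y \<in> insert vj Sj. (x, y) \<noteq> (vi, vj) \<longrightarrow> y \<notin> nb x)"
proof -
  have "finite A"
    using large card.infinite by fastforce
  have "finite (nb vj)" and "card (nb vj) \<le> m"
    using nb_finite nb_card \<open>vj \<in> V\<close> by simp_all
  moreover have "card (insert vi (nb vj)) \<le> Suc (card (nb vj))"
    by (rule card_insert_le_m1) simp_all
  ultimately obtain Si where Si: "Si \<subseteq> A - insert vi (nb vj)" "card Si = L"
    using exists_subset_card_avoiding[of "insert vi (nb vj)" L A] large by (auto simp: algebra_simps)
  define N where "N = (\<Union>x\<in>insert vi Si. nb x)"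
  have "Si \<subseteq> A" and "vi \<notin> Si"
    using Si by auto
  then have "finite Si" and "Si \<subseteq> V"
    using \<open>finite A\<close> \<open>A \<subseteq> V\<close> finite_subset by auto
  then have "finite N" and "card (insert vi Si) = L + 1"
    using \<open>vi \<notin> Si\<close> \<open>vi \<in> V\<close> Si nb_finite by (auto simp: N_def)
  have "card N \<le> (\<Sum>x\<in>insert vi Si. card (nb x))"
    unfolding N_def using \<open>finite Si\<close> by (intro card_UN_le) simp
  also have "\<dots> \<le> (L + 1) * m"
    using sum_bounded_above[of "insert vi Si" "\<lambda>x. card (nb x)" m] nb_card \<open>Si \<subseteq> V\<close> \<open>vi \<in> V\<close>
      \<open>card (insert vi Si) = L + 1\<close> by auto
  finally have "card (insert vj N) + L \<le> card A"
    using large card_insert_le_m1[of "Suc (card N)" N vj] by (simp add: algebra_simps)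
  with \<open>finite N\<close> obtain Sj where Sj: "Sj \<subseteq> A - insert vj N" "card Sj = L"
    using exists_subset_card_avoiding[of "insert vj N" L A] by auto
  have "y \<notin> nb x" if "x \<in> insert vi Si" "y \<in> insert vj Sj" "(x, y) \<noteq> (vi, vj)" for x y
    using that Si Sj nb_sym[of x vj] by (auto simp: N_def)
  moreover have "Si \<subseteq> A - {vi, vj}" and "Sj \<subseteq> A - {vi, vj}"
    using Si Sj nb_self by (auto simp: N_def)
  ultimately show ?thesis
    using Si(2) Sj(2) by blast
qed

theorem lemma18:
  fixes V :: "'a set" and E :: "('a \<times> 'a) set" and k :: nat and vi vj :: 'a
  assumes "is_dag V E"
    and "k \<ge> 2"
    and "vi \<in> V" and "vj \<in> V" and "vi \<noteq> vj"
    and "\<not> adjacent E vi vj"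
    and "real (card (A_set V E vi vj)) \<ge>
           (2 + real (max_degree V E) ^ 2) * (real (nat \<lceil>log 2 (real k)\<rceil>) + 1)"
  shows "\<exists>Si Sj. is_IPA V E vi vj Si Sj \<and>
           Si \<subseteq> A_set V E vi vj \<and> Sj \<subseteq> A_set V E vi vj \<and>
           card Si = nat \<lceil>log 2 (real k)\<rceil> \<and> card Sj = nat \<lceil>log 2 (real k)\<rceil>"
proof -
  define L where "L = nat \<lceil>log 2 (real k)\<rceil>"
  define d where "d = max_degree V E"
  have EV: "E \<subseteq> V \<times> V" and "finite V"
    using assms(1) by (auto simp: is_dag_def)
  have "degree E v \<le> d" if "v \<in> V" for v
    using \<open>finite V\<close> that by (simp add: d_def max_degree_def)
  then have nbhd_card: "card (moral_nbhd E x) \<le> 1 + d\<^sup>2" if "x \<in> V" for x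
    using card_moral_nbhd_le[OF EV \<open>finite V\<close> that] by blast
  have "real ((2 + d\<^sup>2) * (L + 1)) \<le> real (card (A_set V E vi vj))"
    using assms(7) unfolding d_def L_def
    by (simp only: of_nat_mult of_nat_add of_nat_power of_nat_numeral of_nat_1)
  then have "(2 + d\<^sup>2) * (L + 1) \<le> card (A_set V E vi vj)"
    by linarith
  then have large: "(1 + d\<^sup>2 + 1) * (L + 1) \<le> card (A_set V E vi vj)"
    by (simp add: add.commute)
  have "A_set V E vi vj \<subseteq> V"
    by (auto simp: A_set_def)
  then obtain Si Sj where Si: "Si \<subseteq> A_set V E vi vj - {vi, vj}" "Sj \<subseteq> A_set V E vi vj - {vi, vj}"
    and card: "card Si = L" "card Sj = L"
    and far: "\<forall>x \<in> insert vi Si. \<forall>y \<in> insert vj Sj.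
      (x, y) \<noteq> (vi, vj) \<longrightarrow> y \<notin> moral_nbhd E x"
    using exists_far_subsets[OF _ assms(3,4) finite_moral_nbhd[OF EV \<open>finite V\<close>] nbhd_card
      moral_nbhd_self moral_nbhd_sym large] by blast
  have "is_IPA V E vi vj Si Sj"
    using assms(1,3-6) Si far by (rule is_IPA_if_moral_separated)
  then show ?thesis
    using Si card by (auto simp: L_def)
qed

end
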